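(* Consider the Long-Short-Range Message-Passing (LSR-MP) architecture described in the context. Suppose that (i) the short-range module is rotation-invariant in its scalar output, i.e. $\textsc{Short}_h(Z, R\vec p) = \textsc{Short}_h(Z,\vec p)$ for all $R\in SO(3)$, and its vectorial output transforms by rotation, $\textsc{Short}_v(Z,R\vec p) = R\,\textsc{Short}_v(Z,\vec p)$; and (ii) the long-range bipartite module is rotation-invariant in its scalar output, i.e. for all $R\in SO(3)$ and all inputs, $$\textsc{Long}_x(h,H,x^0,R\vec\mu^0,R\vec p,R\vec V,R\vec P)=\textsc{Long}_x(h,H,x^0,\vec\mu^0,\vec p,\vec V,\vec P).$$ Then the scalar output $h_{\text{out}}$ of the LSR-MP architecture is rotation-invariant: replacing every atomic position $\vec p_i$ by $R\vec p_i$ (for any $R\in SO(3)$) leaves $h_{\text{out}}$ unchanged.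
   Context: A molecule has $n$ atoms with atomic numbers $Z=(z_1,\dots,z_n)$ and positions $\vec p_1,\dots,\vec p_n\in\mathbb{R}^3$; a rotation $R\in SO(3)$ acts by $\vec p_i\mapsto R\vec p_i$ and on a vectorial embedding $\vec w\in\mathbb{R}^{3\times d}$ by $\vec w\mapsto R\vec w$. Scalar embeddings lie in $\mathbb{R}^d$. LSR-MP consists of: (1) a short-range module, a map $(Z,\vec p)\mapsto (h,\vec v)=(\textsc{Short}_h(Z,\vec p),\textsc{Short}_v(Z,\vec p))$ producing for each atom $i$ a scalar embedding $h_i\in\mathbb{R}^d$ and a vectorial embedding $\vec v_i\in\mathbb{R}^{3\times d}$. (2) A fragmentation module: a fixed assignment of the atoms into fragments $S(1),\dots,S(m)\subseteq\{1,\dots,n\}$, and fragment embeddings $H_j=\sum_{i\in S(j)}\alpha_i\odot h_i$, $\vec V_j=\sum_{i\in S(j)}\beta_i\odot\vec v_i$, $\vec P_j=\sum_{i\in S(j)}\gamma_i\vec p_i$, where $\alpha_i,\beta_i\in\mathbb{R}^d$ (acting channelwise, $\odot$ the Hadamard product) and $\gamma_i\in\mathbb{R}$ are fixed weights not affected by the rotation. (3) A long-range bipartite module: initial long-range embeddings $x^0_i=\textsc{Dense}(h_i)$, $\vec\mu^0_i=U(\vec v_i)$, and a map producing long-range scalar embeddings $x=\textsc{Long}_x(h,H,x^0,\vec\mu^0,\vec p,\vec V,\vec P)$ and vectorial embeddings $\vec\mu=\textsc{Long}_\mu(h,H,x^0,\vec\mu^0,\vec p,\vec V,\vec P)$. (4)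 Outputs $h_{\text{out}}=\textsc{Dense}([h,x])$ and $\vec v_{\text{out}}=U([\vec v,\vec\mu])$, where $[\cdot,\cdot]$ is channel concatenation, $\textsc{Dense}$ is a linear layer with bias followed by an activation acting on scalar features, and $U$ is a linear map without bias acting only on the channel dimension (so $U(R\vec w)=RU(\vec w)$). *)

theory Defs
  imports "HOL-Analysis.Analysis"
begin

text \<open>Atoms are indexed by a finite type 'a, fragments by a finite
type 'f, channels by a finite type 'd (so d = CARD('d)).\<close>

type_synonym 'd scal = "'d \<Rightarrow> real"
type_synonym 'd vect = "'d \<Rightarrow> real^3"

definition rot_pos :: "real^3^3 \<Rightarrow> ('i \<Rightarrow> real^3) \<Rightarrow> ('i \<Rightarrow> real^3)" where
  "rot_pos R p = (\<lambda>i. R *v p i)"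

definition rot_vect :: "real^3^3 \<Rightarrow> ('i \<Rightarrow> 'd vect) \<Rightarrow> ('i \<Rightarrow> 'd vect)" where
  "rot_vect R w = (\<lambda>i c. R *v w i c)"

definition dense :: "(real \<Rightarrow> real) \<Rightarrow> ('o \<Rightarrow> 'c::finite \<Rightarrow> real) \<Rightarrow> ('o \<Rightarrow> real)
                     \<Rightarrow> 'c scal \<Rightarrow> 'o scal" where
  "dense \<sigma> W b h = (\<lambda>k. \<sigma> ((\<Sum>c\<in>UNIV. W k c * h c) + b k))"

definition chan_lin :: "('o \<Rightarrow> 'c::finite \<Rightarrow> real) \<Rightarrow> 'c vect \<Rightarrow> 'o vect" where
  "chan_lin W w = (\<lambda>k. \<Sum>c\<in>UNIV. W k c *\<^sub>R w c)"

definition concat_ch :: "('c \<Rightarrow> 'x) \<Rightarrow> ('e \<Rightarrow> 'x) \<Rightarrow> ('c + 'e \<Rightarrow> 'x)" where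
  "concat_ch u w = (\<lambda>k. case k of Inl c \<Rightarrow> u c | Inr e \<Rightarrow> w e)"

definition lsr_h_out ::
  "(('a::finite \<Rightarrow> nat) \<Rightarrow> ('a \<Rightarrow> real^3) \<Rightarrow> 'a \<Rightarrow> 'd::finite scal)
   \<Rightarrow> (('a \<Rightarrow> nat) \<Rightarrow> ('a \<Rightarrow> real^3) \<Rightarrow> 'a \<Rightarrow> 'd vect)
   \<Rightarrow> (('a \<Rightarrow> 'd scal) \<Rightarrow> ('f::finite \<Rightarrow> 'd scal) \<Rightarrow> ('a \<Rightarrow> 'd scal) \<Rightarrow> ('a \<Rightarrow> 'd vect)
       \<Rightarrow> ('a \<Rightarrow> real^3) \<Rightarrow> ('f \<Rightarrow> 'd vect) \<Rightarrow> ('f \<Rightarrow> real^3) \<Rightarrow> ('a \<Rightarrow> 'd scal))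
   \<Rightarrow> ('f \<Rightarrow> 'a set) \<Rightarrow> ('a \<Rightarrow> 'd scal) \<Rightarrow> ('a \<Rightarrow> 'd \<Rightarrow> real) \<Rightarrow> ('a \<Rightarrow> real)
   \<Rightarrow> (real \<Rightarrow> real) \<Rightarrow> ('d \<Rightarrow> 'd \<Rightarrow> real) \<Rightarrow> ('d \<Rightarrow> real)
   \<Rightarrow> ('d \<Rightarrow> 'd \<Rightarrow> real)
   \<Rightarrow> (real \<Rightarrow> real) \<Rightarrow> ('d \<Rightarrow> 'd + 'd \<Rightarrow> real) \<Rightarrow> ('d \<Rightarrow> real)
   \<Rightarrow> ('a \<Rightarrow> nat) \<Rightarrow> ('a \<Rightarrow> real^3) \<Rightarrow> 'a \<Rightarrow> 'd scal" where
  "lsr_h_out Sh Sv Lx S \<alpha> \<beta> \<gamma> \<sigma>1 W1 b1 U0 \<sigma>2 W2 b2 Z p =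
    (let h = Sh Z p;
         v = Sv Z p;
         H = (\<lambda>j c. \<Sum>i\<in>S j. \<alpha> i c * h i c);
         V = (\<lambda>j c. \<Sum>i\<in>S j. \<beta> i c *\<^sub>R v i c);
         P = (\<lambda>j. \<Sum>i\<in>S j. \<gamma> i *\<^sub>R p i);
         x0 = (\<lambda>i. dense \<sigma>1 W1 b1 (h i));
         \<mu>0 = (\<lambda>i. chan_lin U0 (v i));
         x = Lx h H x0 \<mu>0 p V P
     in (\<lambda>i. dense \<sigma>2 W2 b2 (concat_ch (h i) (x i))))"

end

theory Submission
  imports Defs
begin

text \<open>Fragment pooling of vectors and positions and the channel map U are linear
combinations taken outside the spatial index, so they commute with any matrix R.
Rotating the positions therefore rotates exactly the equivariant arguments of Lx,
whose scalar output is unchanged; h is invariant by hypothesis, and the output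
layer only sees h and x.\<close>

lemma rot_pos_weighted_pool:
  "(\<lambda>j. \<Sum>i\<in>S j. \<gamma> i *\<^sub>R rot_pos R p i) = rot_pos R (\<lambda>j. \<Sum>i\<in>S j. \<gamma> i *\<^sub>R p i)"
  by (simp add: rot_pos_def vec.sum matrix_vector_mult_scaleR)

lemma rot_vect_weighted_pool:
  "(\<lambda>j c. \<Sum>i\<in>S j. \<beta> i c *\<^sub>R rot_vect R v i c) = rot_vect R (\<lambda>j c. \<Sum>i\<in>S j. \<beta> i c *\<^sub>R v i c)"
  by (simp add: rot_vect_def vec.sum matrix_vector_mult_scaleR)

lemma chan_lin_rot_vect:
  "(\<lambda>i. chan_lin U (rot_vect R v i)) = rot_vect R (\<lambda>i. chan_lin U (v i))"
  by (simp add: rot_vect_def chan_lin_def vec.sum matrix_vector_mult_scaleR)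

theorem proposition1:
  fixes Sh :: "('a::finite \<Rightarrow> nat) \<Rightarrow> ('a \<Rightarrow> real^3) \<Rightarrow> 'a \<Rightarrow> 'd::finite scal"
    and Sv :: "('a \<Rightarrow> nat) \<Rightarrow> ('a \<Rightarrow> real^3) \<Rightarrow> 'a \<Rightarrow> 'd vect"
    and Lx :: "('a \<Rightarrow> 'd scal) \<Rightarrow> ('f::finite \<Rightarrow> 'd scal) \<Rightarrow> ('a \<Rightarrow> 'd scal) \<Rightarrow> ('a \<Rightarrow> 'd vect)
       \<Rightarrow> ('a \<Rightarrow> real^3) \<Rightarrow> ('f \<Rightarrow> 'd vect) \<Rightarrow> ('f \<Rightarrow> real^3) \<Rightarrow> ('a \<Rightarrow> 'd scal)"
    and S :: "'f \<Rightarrow> 'a set"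
    and \<alpha> \<beta> :: "'a \<Rightarrow> 'd \<Rightarrow> real" and \<gamma> :: "'a \<Rightarrow> real"
    and \<sigma>1 \<sigma>2 :: "real \<Rightarrow> real"
    and W1 U0 :: "'d \<Rightarrow> 'd \<Rightarrow> real" and b1 b2 :: "'d \<Rightarrow> real"
    and W2 :: "'d \<Rightarrow> 'd + 'd \<Rightarrow> real"
    and Z :: "'a \<Rightarrow> nat" and p :: "'a \<Rightarrow> real^3" and R :: "real^3^3"
  assumes short_h: "\<And>R Z p. rotation_matrix R \<Longrightarrow> Sh Z (rot_pos R p) = Sh Z p"
    and short_v: "\<And>R Z p. rotation_matrix R \<Longrightarrow> Sv Z (rot_pos R p) = rot_vect R (Sv Z p)"
    and long_x: "\<And>R h H x0 \<mu>0 q V P. rotation_matrix R \<Longrightarrow>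
        Lx h H x0 (rot_vect R \<mu>0) (rot_pos R q) (rot_vect R V) (rot_pos R P)
        = Lx h H x0 \<mu>0 q V P"
    and rot: "rotation_matrix R"
  shows "lsr_h_out Sh Sv Lx S \<alpha> \<beta> \<gamma> \<sigma>1 W1 b1 U0 \<sigma>2 W2 b2 Z (rot_pos R p)
       = lsr_h_out Sh Sv Lx S \<alpha> \<beta> \<gamma> \<sigma>1 W1 b1 U0 \<sigma>2 W2 b2 Z p"
  \<comment> \<open>S must be fixed: otherwise the pooling rules also match the bare \<open>sum\<close> with S the identity.\<close>
  unfolding lsr_h_out_def Let_def short_h[OF rot] short_v[OF rot]
    rot_vect_weighted_pool[where S = S] rot_pos_weighted_pool[where S = S] chan_lin_rot_vect long_x[OF rot] ..

end
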